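(* In the setting described in the context, suppose the initial datum is constant, $u_0(x)=u_\star$ for all $x\in\mathbb R$, and the color function $v:\mathbb R\to[0,1]$ is any smooth function. Then the discrete solution produced by the scheme is constant in space at every time level: $u^n_j=u_\star$ for all $n\ge0$ and all $j\in\mathbb Z$, i.e. $u_{\Delta x}(t^n,x)=u_\star$ for all $x\in\mathbb R$.
   Context: Let $f^\pm:\mathbb R\to\mathbb R$ be twice differentiable, $\theta_\pm:\mathbb R\to\mathbb R$ increasing bijections with inverses $\gamma_\pm$. For $u\in\mathbb R$, $v\in[0,1]$, $\mathcal C_0(u,v)=(1-v)\gamma_-(u)+v\gamma_+(u)$, $\mathcal C_1(u,v)=(1-v)f^-(\gamma_-(u))+vf^+(\gamma_+(u))$, $w(u,v)=\mathcal C_0(u,v)$, with $\partial_uw(u,v)>0$; $u(w,v)$ denotes the inverse in $u$ and $f(w,v)=\mathcal C_1(u(w,v),v)$. Mesh $\Delta t,\Delta x>0$, $x_j=j\Delta x$; $u^0_j=\frac1{\Delta x}\int_{x_{j-1/2}}^{x_{j+1/2}}u_0$, $v_{j+1/2}=\frac1{\Delta x}\int_{x_j}^{x_{j+1}}v$. Numerical flux $g(\cdot,\cdot;v)$: locally Lipschitz, $g(a,a;v)=f(a,v)$, nondecreasing in the first and nonincreasing in the second argument. Scheme: $w^n_{j-1/2,+}=w(u^n_j,v_{j-1/2})$, $w^n_{j+1/2,-}=w(u^n_j,v_{j+1/2})$, $w^n_j=\frac12(w^n_{j-1/2,+}+w^n_{j+1/2,-})$; $g^n_{j+1/2}=g(w^n_{j+1/2,-},w^n_{j+1/2,+};v_{j+1/2})$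 (where $w^n_{j+1/2,+}=w(u^n_{j+1},v_{j+1/2})$), $G^n_{j+1/2,-}=g^n_{j+1/2}-f(w^n_{j+1/2,-},v_{j+1/2})$, $G^n_{j-1/2,+}=g^n_{j-1/2}-f(w^n_{j-1/2,+},v_{j-1/2})$, $w^{n+1}_j=w^n_j-\frac{\Delta t}{\Delta x}(G^n_{j+1/2,-}-G^n_{j-1/2,+})$, and $u^{n+1}_j$ is the unique solution of $\frac12(w(u^{n+1}_j,v_{j-1/2})+w(u^{n+1}_j,v_{j+1/2}))=w^{n+1}_j$; $u_{\Delta x}(t^n,x)=u^n_j$ on $(x_{j-1/2},x_{j+1/2})$. *)

theory Defs
  imports "HOL-Analysis.Analysis"
begin

definition C0 :: "(real \<Rightarrow> real) \<Rightarrow> (real \<Rightarrow> real) \<Rightarrow> real \<Rightarrow> real \<Rightarrow> real" where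
  "C0 gm gp u v = (1 - v) * gm u + v * gp u"

definition C1 :: "(real \<Rightarrow> real) \<Rightarrow> (real \<Rightarrow> real) \<Rightarrow> (real \<Rightarrow> real) \<Rightarrow> (real \<Rightarrow> real)
    \<Rightarrow> real \<Rightarrow> real \<Rightarrow> real" where
  "C1 gm gp fm fp u v = (1 - v) * fm (gm u) + v * fp (gp u)"

definition uinv :: "(real \<Rightarrow> real) \<Rightarrow> (real \<Rightarrow> real) \<Rightarrow> real \<Rightarrow> real \<Rightarrow> real" where
  "uinv gm gp w v = (THE u. C0 gm gp u v = w)"

definition fw :: "(real \<Rightarrow> real) \<Rightarrow> (real \<Rightarrow> real) \<Rightarrow> (real \<Rightarrow> real) \<Rightarrow> (real \<Rightarrow> real)
    \<Rightarrow> real \<Rightarrow> real \<Rightarrow> real" where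
  "fw gm gp fm fp w v = C1 gm gp fm fp (uinv gm gp w v) v"

definition smooth_real :: "(real \<Rightarrow> real) \<Rightarrow> bool" where
  "smooth_real h \<longleftrightarrow> (\<forall>k x. ((deriv ^^ k) h) differentiable (at x))"

definition vhalf :: "(real \<Rightarrow> real) \<Rightarrow> real \<Rightarrow> int \<Rightarrow> real" where
  "vhalf v dx j = integral {real_of_int j * dx .. (real_of_int j + 1) * dx} v / dx"

text \<open>U n j = u^n_j is a solution of the scheme, with flux g (arguments: left state,
  right state, color), flux function f (arguments: w, v) and map W(u,v) = w(u,v).\<close>
definition scheme_sol ::
  "(real \<Rightarrow> real \<Rightarrow> real) \<Rightarrow> (real \<Rightarrow> real \<Rightarrow> real) \<Rightarrow> (real \<Rightarrow> real \<Rightarrow> real \<Rightarrow> real)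
    \<Rightarrow> (real \<Rightarrow> real) \<Rightarrow> (real \<Rightarrow> real) \<Rightarrow> real \<Rightarrow> real \<Rightarrow> (nat \<Rightarrow> int \<Rightarrow> real) \<Rightarrow> bool" where
  "scheme_sol W f g u0 v dt dx U \<longleftrightarrow>
     (\<forall>j. U 0 j = integral {(real_of_int j - 1/2) * dx .. (real_of_int j + 1/2) * dx} u0 / dx) \<and>
     (\<forall>n j.
        let vr = vhalf v dx j; vl = vhalf v dx (j - 1);
            wl_plus = W (U n j) vl;  \<comment> \<open>w^n_{j-1/2,+}\<close>
            wr_minus = W (U n j) vr; \<comment> \<open>w^n_{j+1/2,-}\<close>
            wj = (wl_plus + wr_minus) / 2;
            gr = g wr_minus (W (U n (j + 1)) vr) vr;   \<comment> \<open>g^n_{j+1/2}\<close>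
            gl = g (W (U n (j - 1)) vl) wl_plus vl;    \<comment> \<open>g^n_{j-1/2}\<close>
            Gr = gr - f wr_minus vr;   \<comment> \<open>G^n_{j+1/2,-}\<close>
            Gl = gl - f wl_plus vl;    \<comment> \<open>G^n_{j-1/2,+}\<close>
            wnew = wj - dt / dx * (Gr - Gl)
        in (W (U (Suc n) j) vl + W (U (Suc n) j) vr) / 2 = wnew)"

end

theory Submission
  imports Defs
begin

text \<open>A constant state is a steady state of the scheme: by consistency of the flux every
  flux difference G vanishes, so each cell keeps its averaged conserved quantity
  (w(u,v_{j-1/2}) + w(u,v_{j+1/2}))/2. As w(\<cdot>,v) is strictly increasing for every colour,
  this average determines u, and induction on the time level gives the claim. Only consistency
  of the flux and monotonicity of w enter; the Lipschitz and monotonicity hypotheses on g do not.\<close>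

lemma integral_average_in_bounds:
  fixes h :: "real \<Rightarrow> real"
  assumes "continuous_on {a..b} h" and "a < b" and "\<And>x. x \<in> {a..b} \<Longrightarrow> h x \<in> {m..M}"
  shows "integral {a..b} h / (b - a) \<in> {m..M}"
proof -
  have h_int: "h integrable_on {a..b}"
    using assms(1) by (rule integrable_continuous_real)
  have "integral {a..b} (\<lambda>x. m) \<le> integral {a..b} h"
    by (rule integral_le) (use h_int assms(3) in auto)
  moreover have "integral {a..b} h \<le> integral {a..b} (\<lambda>x. M)"
    by (rule integral_le) (use h_int assms(3) in auto)
  ultimately show ?thesis
    using assms(2) by (simp add: field_simps mult.commute)
qed

lemma smooth_real_imp_continuous: "smooth_real h \<Longrightarrow> continuous_on UNIV h"
  unfolding smooth_real_def
  by (metis continuous_at_imp_continuous_on differentiable_imp_continuous_within funpow_0)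

lemma vhalf_in_unit_interval:
  assumes "continuous_on UNIV v" and "\<forall>x. v x \<in> {0..1}" and "dx > 0"
  shows "vhalf v dx j \<in> {0..1}"
proof -
  have "integral {real_of_int j * dx .. (real_of_int j + 1) * dx} v
          / ((real_of_int j + 1) * dx - real_of_int j * dx) \<in> {0..1}"
    using continuous_on_subset[OF assms(1) subset_UNIV] assms(2,3)
    by (intro integral_average_in_bounds) (auto simp: algebra_simps)
  then show ?thesis
    unfolding vhalf_def by (simp add: algebra_simps)
qed

lemma positive_derivative_imp_strict_mono:
  assumes "\<And>x. \<exists>d>0. (h has_real_derivative d) (at x)"
  shows "strict_mono h"
proof (rule strict_monoI)
  show "h x < h y" if "x < y" for x y
    using that by (rule DERIV_pos_imp_increasing) (use assms in blast)
qed

lemma mean_of_strict_mono_eqD: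
  fixes h k :: "real \<Rightarrow> real"
  assumes "strict_mono h" and "strict_mono k" and "(h a + k a) / 2 = (h b + k b) / 2"
  shows "a = b"
proof (rule ccontr)
  assume "a \<noteq> b"
  then consider "a < b" | "b < a" by linarith
  then show False
    using assms by cases (auto dest!: strict_monoD[of h] strict_monoD[of k])
qed

lemma scheme_sol_initial_const:
  assumes "scheme_sol W f g u0 v dt dx U" and "\<forall>x. u0 x = c" and "dx > 0"
  shows "U 0 j = c"
proof -
  have "u0 = (\<lambda>x. c)"
    using assms(2) by blast
  then have "U 0 j = integral {(real_of_int j - 1/2) * dx .. (real_of_int j + 1/2) * dx} (\<lambda>x. c) / dx"
    using assms(1) unfolding scheme_sol_def by simp
  also have "\<dots> = c"
    using assms(3) by (simp add: algebra_simps)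
  finally show ?thesis .
qed

lemma scheme_sol_step_const:
  assumes "scheme_sol W f g u0 v dt dx U"
    and consistent: "\<And>a i. g a a (vhalf v dx i) = f a (vhalf v dx i)"
    and "\<forall>i. U n i = c"
  shows "(W (U (Suc n) j) (vhalf v dx (j - 1)) + W (U (Suc n) j) (vhalf v dx j)) / 2
           = (W c (vhalf v dx (j - 1)) + W c (vhalf v dx j)) / 2"
  using assms(1,3) consistent[of _ j] consistent[of _ "j - 1"]
  unfolding scheme_sol_def Let_def by simp

lemma scheme_sol_const:
  assumes sol: "scheme_sol W f g u0 v dt dx U"
    and consistent: "\<And>a i. g a a (vhalf v dx i) = f a (vhalf v dx i)"
    and W_mono: "\<And>i. strict_mono (\<lambda>u. W u (vhalf v dx i))"
    and u0_const: "\<forall>x. u0 x = c" and "dx > 0"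
  shows "U n j = c"
proof (induction n arbitrary: j)
  case 0
  show ?case using scheme_sol_initial_const[OF sol u0_const \<open>dx > 0\<close>] .
next
  case (Suc n)
  have "\<forall>i. U n i = c"
    using Suc.IH by blast
  then show ?case
    by (rule mean_of_strict_mono_eqD[OF W_mono W_mono scheme_sol_step_const[OF sol consistent]])
qed

theorem proposition2p2:
  fixes fm fp thetam thetap gm gp :: "real \<Rightarrow> real"
    and g :: "real \<Rightarrow> real \<Rightarrow> real \<Rightarrow> real"
    and u0 v :: "real \<Rightarrow> real"
    and ustar dt dx :: real
    and U :: "nat \<Rightarrow> int \<Rightarrow> real"
  assumes fm_C2: "\<forall>x. fm differentiable (at x) \<and> deriv fm differentiable (at x)"
    and fp_C2: "\<forall>x. fp differentiable (at x) \<and> deriv fp differentiable (at x)"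
    and thm_inc: "strict_mono thetam" and thm_bij: "bij thetam"
    and thp_inc: "strict_mono thetap" and thp_bij: "bij thetap"
    and gm_inv: "\<forall>x. gm (thetam x) = x \<and> thetam (gm x) = x"
    and gp_inv: "\<forall>x. gp (thetap x) = x \<and> thetap (gp x) = x"
    and w_deriv: "\<forall>u. \<forall>c\<in>{0..1}. \<exists>d>0. ((\<lambda>s. C0 gm gp s c) has_real_derivative d) (at u)"
    and g_loclip: "\<forall>c\<in>{0..1}. \<forall>R. \<exists>L. \<forall>a b a' b'.
        \<bar>a\<bar> \<le> R \<and> \<bar>b\<bar> \<le> R \<and> \<bar>a'\<bar> \<le> R \<and> \<bar>b'\<bar> \<le> R \<longrightarrow>
        \<bar>g a b c - g a' b' c\<bar> \<le> L * (\<bar>a - a'\<bar> + \<bar>b - b'\<bar>)"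
    and g_cons: "\<forall>c\<in>{0..1}. \<forall>a. g a a c = fw gm gp fm fp a c"
    and g_mono1: "\<forall>c\<in>{0..1}. \<forall>a a' b. a \<le> a' \<longrightarrow> g a b c \<le> g a' b c"
    and g_mono2: "\<forall>c\<in>{0..1}. \<forall>a b b'. b \<le> b' \<longrightarrow> g a b' c \<le> g a b c"
    and dt_pos: "dt > 0" and dx_pos: "dx > 0"
    and u0_const: "\<forall>x. u0 x = ustar"
    and v_smooth: "smooth_real v"
    and v_range: "\<forall>x. v x \<in> {0..1}"
    and sol: "scheme_sol (C0 gm gp) (fw gm gp fm fp) g u0 v dt dx U"
  shows "\<forall>n j. U n j = ustar"
proof (intro allI)
  fix n j
  have colour_range: "vhalf v dx i \<in> {0..1}" for i
    using smooth_real_imp_continuous[OF v_smooth] v_range dx_pos by (rule vhalf_in_unit_interval)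
  show "U n j = ustar"
  proof (rule scheme_sol_const[OF sol _ _ u0_const dx_pos])
    show "g a a (vhalf v dx i) = fw gm gp fm fp a (vhalf v dx i)" for a i
      using g_cons colour_range by blast
    show "strict_mono (\<lambda>u. C0 gm gp u (vhalf v dx i))" for i
      using w_deriv colour_range by (intro positive_derivative_imp_strict_mono) blast
  qed
qed

end
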